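(* Let $G=(V,E)$ be a finite simple undirected graph with adjacency matrix $g$ and degrees $k_i$, containing at least one 4-spanning tree. Then $$C(4)=\frac{16\,|M_{63}^{(4)}|}{|M_{11}^{(4)}|+|M_{13}^{(4)}|}=\frac{4\sum_{i}\operatorname{tr}(g_{-i}^3)}{\sum_i k_i(k_i-1)(k_i-2)+6\sum_{\{i,j\}\in E}(k_i-1)(k_j-1)-3\operatorname{tr}(g^3)}.$$
   Context: For $b\ge3$, a $b$-clique is a set of $b$ pairwise adjacent nodes; a $b$-spanning tree in $G$ is a (not necessarily induced) subgraph of $G$ that is a tree on exactly $b$ nodes; and $C(b)=b^{b-2}\times(\#b\text{-cliques})/(\#b\text{-spanning trees})$. $|M_{63}^{(4)}|$ is the number of 4-cliques, $|M_{11}^{(4)}|$ the number of (not necessarily induced) subgraphs isomorphic to the star $K_{1,3}$, and $|M_{13}^{(4)}|$ the number of (not necessarily induced) subgraphs isomorphic to the path with 4 nodes and 3 edges. $g_{-i}$ is the adjacency matrix of the subgraph induced by the neighbourhood $\Gamma_G(i)$ of $i$; $k_i$ is the degree of $i$. *)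

theory Defs
  imports "HOL-Analysis.Analysis"
begin

definition simple_graph :: "'a set \<Rightarrow> ('a \<Rightarrow> 'a \<Rightarrow> bool) \<Rightarrow> bool" where
  "simple_graph V E \<longleftrightarrow> finite V \<and> (\<forall>x y. E x y \<longrightarrow> x \<in> V \<and> y \<in> V)
     \<and> (\<forall>x y. E x y \<longrightarrow> E y x) \<and> (\<forall>x. \<not> E x x)"

definition gedges :: "'a set \<Rightarrow> ('a \<Rightarrow> 'a \<Rightarrow> bool) \<Rightarrow> 'a set set" where
  "gedges V E = {{x, y} | x y. x \<in> V \<and> y \<in> V \<and> E x y}"

definition adj :: "('a \<Rightarrow> 'a \<Rightarrow> bool) \<Rightarrow> 'a \<Rightarrow> 'a \<Rightarrow> real" where
  "adj E i j = (if E i j then 1 else 0)"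

definition deg :: "'a set \<Rightarrow> ('a \<Rightarrow> 'a \<Rightarrow> bool) \<Rightarrow> 'a \<Rightarrow> nat" where
  "deg V E i = card {j \<in> V. E i j}"

definition nbhd :: "'a set \<Rightarrow> ('a \<Rightarrow> 'a \<Rightarrow> bool) \<Rightarrow> 'a \<Rightarrow> 'a set" where
  "nbhd V E i = {j \<in> V. E i j}"

text \<open>With S = V and M = adj E this is tr(g^3); with S = nbhd V E i it is tr(g_{-i}^3),
  g_{-i} being the principal submatrix of g on the neighbourhood of i.\<close>
definition trace_cube :: "'a set \<Rightarrow> ('a \<Rightarrow> 'a \<Rightarrow> real) \<Rightarrow> real" where
  "trace_cube S M = (\<Sum>i\<in>S. \<Sum>j\<in>S. \<Sum>l\<in>S. M i j * M j l * M l i)"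

definition cliques :: "'a set \<Rightarrow> ('a \<Rightarrow> 'a \<Rightarrow> bool) \<Rightarrow> nat \<Rightarrow> 'a set set" where
  "cliques V E b = {S. S \<subseteq> V \<and> card S = b \<and> (\<forall>x\<in>S. \<forall>y\<in>S. x \<noteq> y \<longrightarrow> E x y)}"

text \<open>Subgraphs are given by their edge sets F (subsets of the edges of G);
  their node set is the union of the edges.\<close>
definition sg_connected :: "'a set set \<Rightarrow> bool" where
  "sg_connected F \<longleftrightarrow> (\<forall>x\<in>\<Union>F. \<forall>y\<in>\<Union>F. (\<lambda>u v. {u, v} \<in> F)\<^sup>*\<^sup>* x y)"

definition sg_has_cycle :: "'a set set \<Rightarrow> bool" where
  "sg_has_cycle F \<longleftrightarrow> (\<exists>vs. length vs \<ge> 3 \<and> distinct vs \<and>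
       (\<forall>i < length vs. {vs ! i, vs ! ((i + 1) mod length vs)} \<in> F))"

definition sg_tree :: "'a set set \<Rightarrow> bool" where
  "sg_tree F \<longleftrightarrow> finite F \<and> sg_connected F \<and> \<not> sg_has_cycle F"

text \<open>b-spanning trees: (not necessarily induced) subgraphs that are trees on exactly b nodes.\<close>
definition spanning_trees :: "'a set \<Rightarrow> ('a \<Rightarrow> 'a \<Rightarrow> bool) \<Rightarrow> nat \<Rightarrow> 'a set set set" where
  "spanning_trees V E b = {F. F \<subseteq> gedges V E \<and> sg_tree F \<and> card (\<Union>F) = b}"

definition C :: "'a set \<Rightarrow> ('a \<Rightarrow> 'a \<Rightarrow> bool) \<Rightarrow> nat \<Rightarrow> real" where
  "C V E b = real b ^ (b - 2) * real (card (cliques V E b)) / real (card (spanning_trees V E b))"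

text \<open>M_11^(4): subgraphs isomorphic to the star K_{1,3};
  M_13^(4): subgraphs isomorphic to the path with 4 nodes and 3 edges.\<close>
definition stars3 :: "'a set \<Rightarrow> ('a \<Rightarrow> 'a \<Rightarrow> bool) \<Rightarrow> 'a set set set" where
  "stars3 V E = {F. F \<subseteq> gedges V E \<and>
     (\<exists>c a b d. distinct [c, a, b, d] \<and> F = {{c, a}, {c, b}, {c, d}})}"

definition paths4 :: "'a set \<Rightarrow> ('a \<Rightarrow> 'a \<Rightarrow> bool) \<Rightarrow> 'a set set set" where
  "paths4 V E = {F. F \<subseteq> gedges V E \<and>
     (\<exists>a b c d. distinct [a, b, c, d] \<and> F = {{a, b}, {b, c}, {c, d}})}"

end

theory Submission
  imports Defs
begin

(* A tree on four vertices is either the star K_{1,3} or the path P_4, so the 4-spanning trees are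
   exactly the subgraphs counted by M_11 and M_13, and 4^2 = 16 gives the first identity.
   The second one is double counting of ordered vertex tuples: sum_i tr(g_{-i}^3) counts ordered
   4-cliques (24 per clique), sum_i k_i(k_i-1)(k_i-2) counts stars with ordered leaves (6 per star),
   and twice the edge sum of (k_i-1)(k_j-1) counts the walks a-b-c-d without backtracking. These are
   the ordered 4-paths (2 per path) together with the closed walks a = d, i.e. the tr(g^3) ordered
   triangles, so the denominator equals 6 (|M_11| + |M_13|). *)

section \<open>Trees on four vertices\<close>

lemma sg_has_cycle_triangle:
  assumes "distinct [x, y, z]" "{x, y} \<in> F" "{y, z} \<in> F" "{z, x} \<in> F"
  shows "sg_has_cycle F"
  unfolding sg_has_cycle_def
proof (intro exI conjI allI impI)
  fix i assume "i < length [x, y, z]"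
  then have "i = 0 \<or> i = 1 \<or> i = 2" by auto
  then show "{[x, y, z] ! i, [x, y, z] ! ((i + 1) mod length [x, y, z])} \<in> F"
    using assms by auto
qed (use assms in auto)

lemma sg_has_cycle_square:
  assumes "distinct [w, x, y, z]" "{w, x} \<in> F" "{x, y} \<in> F" "{y, z} \<in> F" "{z, w} \<in> F"
  shows "sg_has_cycle F"
  unfolding sg_has_cycle_def
proof (intro exI conjI allI impI)
  fix i assume "i < length [w, x, y, z]"
  then have "i = 0 \<or> i = 1 \<or> i = 2 \<or> i = 3" by auto
  then show "{[w, x, y, z] ! i, [w, x, y, z] ! ((i + 1) mod length [w, x, y, z])} \<in> F"
    using assms by auto
qed (use assms in auto)

lemma sg_connected_if_hub:
  assumes "\<And>x. x \<in> \<Union>F \<Longrightarrow> (\<lambda>u v. {u, v} \<in> F)\<^sup>*\<^sup>* h x"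
  shows "sg_connected F"
  unfolding sg_connected_def
proof (intro ballI)
  let ?R = "\<lambda>u v. {u, v} \<in> F"
  fix x y assume "x \<in> \<Union>F" "y \<in> \<Union>F"
  have "?R\<inverse>\<inverse> = ?R" by (auto simp: fun_eq_iff insert_commute)
  then have "?R\<^sup>*\<^sup>* x h" using rtranclp_converseI[OF assms[OF \<open>x \<in> \<Union>F\<close>]] by simp
  then show "?R\<^sup>*\<^sup>* x y" using assms[OF \<open>y \<in> \<Union>F\<close>] by (rule rtranclp_trans)
qed

lemma sg_connected_has_branch_vertex:
  assumes edges: "\<forall>e\<in>F. \<exists>x y. x \<noteq> y \<and> e = {x, y}"
    and "sg_connected F" and "card (\<Union>F) \<ge> 3"
  obtains c a b where "a \<noteq> b" "{c, a} \<in> F" "{c, b} \<in> F"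
proof -
  have "\<exists>c a b. a \<noteq> b \<and> {c, a} \<in> F \<and> {c, b} \<in> F"
  proof (rule ccontr)
    let ?R = "\<lambda>u v. {u, v} \<in> F"
    assume "\<nexists>c a b. a \<noteq> b \<and> {c, a} \<in> F \<and> {c, b} \<in> F"
    then have unique: "a = b" if "{c, a} \<in> F" "{c, b} \<in> F" for a b c
      using that by blast
    have "\<Union>F \<noteq> {}" using assms(3) by (intro notI) simp
    then obtain e where "e \<in> F" by blast
    then obtain x y where xy: "{x, y} \<in> F" using edges by metis
    have "\<not> \<Union>F \<subseteq> {x, y}"
    proof
      assume "\<Union>F \<subseteq> {x, y}"
      then have "card (\<Union>F) \<le> card {x, y}" by (intro card_mono) auto
      also have "\<dots> \<le> 2" by (simp add: card_insert_if)
      finally show False using assms(3) by simp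
    qed
    then obtain z where z: "z \<in> \<Union>F" "z \<notin> {x, y}" by blast
    have "?R\<^sup>*\<^sup>* x z" using assms(2) xy z(1) unfolding sg_connected_def by blast
    then have "z \<in> {x, y}"
    proof (induction rule: rtranclp_induct)
      case (step u v)
      then show ?case using unique xy by (auto simp: insert_commute)
    qed simp
    with z(2) show False ..
  qed
  with that show thesis by blast
qed

text \<open>Every vertex of a cycle has two distinct neighbours on it.\<close>

lemma not_sg_has_cycle_if_few_branch_vertices:
  assumes "finite S" "card S \<le> 2"
    and branch: "\<And>v x y. x \<noteq> y \<Longrightarrow> {v, x} \<in> F \<Longrightarrow> {v, y} \<in> F \<Longrightarrow> v \<in> S"
  shows "\<not> sg_has_cycle F"
proof
  assume "sg_has_cycle F"
  then obtain vs where len: "length vs \<ge> 3" and dist: "distinct vs"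
    and cyc: "\<forall>i < length vs. {vs ! i, vs ! ((i + 1) mod length vs)} \<in> F"
    unfolding sg_has_cycle_def by blast
  define n where "n = length vs"
  have "n \<ge> 3" using len unfolding n_def .
  have "vs ! i \<in> S" if "i < n" for i
  proof -
    define j where "j = (if i = 0 then n - 1 else i - 1)"
    have j: "j < n" "(j + 1) mod n = i" "(i + 1) mod n \<noteq> j" "(i + 1) mod n < n"
      using that \<open>n \<ge> 3\<close> unfolding j_def by (auto simp: mod_if)
    have "{vs ! j, vs ! i} \<in> F" using cyc j(1,2) unfolding n_def by auto
    then have "{vs ! i, vs ! j} \<in> F" by (simp add: insert_commute)
    moreover have "{vs ! i, vs ! ((i + 1) mod n)} \<in> F" using cyc that unfolding n_def by auto
    moreover have "vs ! ((i + 1) mod n) \<noteq> vs ! j"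
      using j(1,3,4) dist unfolding n_def by (simp add: nth_eq_iff_index_eq)
    ultimately show ?thesis using branch by blast
  qed
  then have "set vs \<subseteq> S" unfolding n_def by (auto simp: in_set_conv_nth)
  then have "card (set vs) \<le> card S" using assms(1) by (rule card_mono[rotated])
  with len dist assms(2) show False by (simp add: distinct_card)
qed

lemma sg_tree_star:
  assumes "distinct [c, a, b, d]"
  shows "sg_tree {{c, a}, {c, b}, {c, d}}"
proof -
  have "sg_connected {{c, a}, {c, b}, {c, d}}"
    by (rule sg_connected_if_hub[where h = c]) (auto intro: r_into_rtranclp)
  moreover have "\<not> sg_has_cycle {{c, a}, {c, b}, {c, d}}"
    by (rule not_sg_has_cycle_if_few_branch_vertices[where S = "{c}"])
      (use assms in \<open>auto simp: doubleton_eq_iff\<close>)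
  ultimately show ?thesis unfolding sg_tree_def by simp
qed

lemma sg_tree_path:
  assumes "distinct [a, b, c, d]"
  shows "sg_tree {{a, b}, {b, c}, {c, d}}"
proof -
  let ?R = "\<lambda>u v. {u, v} \<in> {{a, b}, {b, c}, {c, d}}"
  have "?R\<^sup>*\<^sup>* b d" by (rule rtranclp.rtrancl_into_rtrancl[of _ _ c]) auto
  then have "sg_connected {{a, b}, {b, c}, {c, d}}"
    by (intro sg_connected_if_hub[where h = b]) (auto intro: r_into_rtranclp simp: insert_commute)
  moreover have "\<not> sg_has_cycle {{a, b}, {b, c}, {c, d}}"
    by (rule not_sg_has_cycle_if_few_branch_vertices[where S = "{b, c}"])
      (use assms in \<open>auto simp: doubleton_eq_iff card_insert_if\<close>)
  ultimately show ?thesis unfolding sg_tree_def by simp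
qed

lemma sg_tree_four_vertices_cases:
  assumes edges: "\<forall>e\<in>F. \<exists>x y. x \<noteq> y \<and> e = {x, y}"
    and tree: "sg_tree F" and four: "card (\<Union>F) = 4"
  shows "(\<exists>c a b d. distinct [c, a, b, d] \<and> F = {{c, a}, {c, b}, {c, d}})
       \<or> (\<exists>a b c d. distinct [a, b, c, d] \<and> F = {{a, b}, {b, c}, {c, d}})"
proof -
  txt \<open>A vertex \<open>c\<close> with two neighbours \<open>a, b\<close> exists; the fourth vertex \<open>d\<close> is attached to \<open>c\<close>,
    \<open>a\<close> or \<open>b\<close>, giving a star or a path, and any further edge would close a cycle.\<close>
  have acyclic: "\<not> sg_has_cycle F" using tree unfolding sg_tree_def by blast
  have "sg_connected F" using tree unfolding sg_tree_def by blast
  then obtain c a b where "a \<noteq> b" and ca: "{c, a} \<in> F" and cb: "{c, b} \<in> F"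
    by (rule sg_connected_has_branch_vertex[OF edges]) (use four in simp)
  have "c \<noteq> a" "c \<noteq> b" using edges ca cb by (metis doubleton_eq_iff)+
  have fin: "finite (\<Union>F)" using four by (intro card_ge_0_finite) simp
  have "{c, a, b} \<subseteq> \<Union>F" using ca cb by blast
  moreover have "card {c, a, b} = 3"
    using \<open>a \<noteq> b\<close> \<open>c \<noteq> a\<close> \<open>c \<noteq> b\<close> by simp
  then have "{c, a, b} \<noteq> \<Union>F" using four by auto
  ultimately obtain d where "d \<in> \<Union>F" "d \<notin> {c, a, b}" by blast
  then have D: "distinct [c, a, b, d]" using \<open>a \<noteq> b\<close> \<open>c \<noteq> a\<close> \<open>c \<noteq> b\<close> by auto
  have "\<Union>F = {c, a, b, d}"
    using \<open>{c, a, b} \<subseteq> \<Union>F\<close> \<open>d \<in> \<Union>F\<close> D fin four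
    by (intro card_subset_eq[symmetric]) auto
  then have pairs: "\<exists>x\<in>{c, a, b, d}. \<exists>y\<in>{c, a, b, d}. x \<noteq> y \<and> e = {x, y}" if "e \<in> F" for e
  proof -
    obtain x y where "x \<noteq> y" "e = {x, y}" using edges \<open>e \<in> F\<close> by blast
    moreover have "x \<in> \<Union>F" "y \<in> \<Union>F" using \<open>e \<in> F\<close> calculation(2) by blast+
    ultimately show ?thesis using \<open>\<Union>F = {c, a, b, d}\<close> by blast
  qed
  obtain e where "e \<in> F" "d \<in> e" using \<open>d \<in> \<Union>F\<close> by blast
  then obtain u v where "u \<in> {c, a, b, d}" "v \<in> {c, a, b, d}" "u \<noteq> v" "e = {u, v}"
    using pairs by blast
  then have "{d, if u = d then v else u} \<in> F \<and> (if u = d then v else u) \<in> {c, a, b}"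
    using \<open>e \<in> F\<close> \<open>d \<in> e\<close> by (auto simp: insert_commute)
  then obtain x where dx: "{d, x} \<in> F" and "x \<in> {c, a, b}" by blast
  have six: "e \<in> {{c, a}, {c, b}, {c, d}, {a, b}, {a, d}, {b, d}}" if "e \<in> F" for e
    using pairs[OF that] by (elim bexE conjE insertE emptyE) (simp_all add: insert_commute)
  have F_eq: "F = T" if "T \<subseteq> F" and "\<And>e. e \<in> F \<Longrightarrow> e \<notin> T \<Longrightarrow>
    e \<in> {{c, a}, {c, b}, {c, d}, {a, b}, {a, d}, {b, d}} \<Longrightarrow> False" for T
  proof (rule subset_antisym[OF subsetI that(1)])
    fix e assume "e \<in> F"
    then show "e \<in> T" using that(2) six by metis
  qed
  from \<open>x \<in> {c, a, b}\<close> consider "x = c" | "x = a" | "x = b" by blast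
  then show ?thesis
  proof cases
    case 1
    have "{a, b} \<notin> F" "{a, d} \<notin> F" "{b, d} \<notin> F"
      using sg_has_cycle_triangle[of c a b F] sg_has_cycle_triangle[of c a d F]
        sg_has_cycle_triangle[of c b d F] D ca cb dx acyclic 1
      by (simp_all add: insert_commute) blast+
    then have "F = {{c, a}, {c, b}, {c, d}}"
      using ca cb dx 1 by (intro F_eq) (auto simp: insert_commute)
    then show ?thesis using D by blast
  next
    case 2
    have "{a, b} \<notin> F" "{c, d} \<notin> F" "{b, d} \<notin> F"
      using sg_has_cycle_triangle[of c a b F] sg_has_cycle_triangle[of c a d F]
        sg_has_cycle_square[of b c a d F] D ca cb dx acyclic 2
      by (simp_all add: insert_commute) blast+
    moreover have "{a, d} \<in> F" using dx 2 by (simp add: insert_commute)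
    ultimately have "F = {{b, c}, {c, a}, {a, d}}"
      using ca cb by (intro F_eq) (auto simp: insert_commute)
    moreover have "distinct [b, c, a, d]" using D by auto
    ultimately show ?thesis by blast
  next
    case 3
    have "{a, b} \<notin> F" "{c, d} \<notin> F" "{a, d} \<notin> F"
      using sg_has_cycle_triangle[of c a b F] sg_has_cycle_triangle[of c b d F]
        sg_has_cycle_square[of a c b d F] D ca cb dx acyclic 3
      by (simp_all add: insert_commute) blast+
    moreover have "{b, d} \<in> F" using dx 3 by (simp add: insert_commute)
    ultimately have "F = {{a, c}, {c, b}, {b, d}}"
      using ca cb by (intro F_eq) (auto simp: insert_commute)
    moreover have "distinct [a, c, b, d]" using D by auto
    ultimately show ?thesis by blast
  qed
qed

section \<open>Counting by fibres and distinct tuples\<close>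

lemma card_eq_mult_if_fibers:
  assumes "finite A" "finite B" "f ` A \<subseteq> B" "\<And>b. b \<in> B \<Longrightarrow> card {a \<in> A. f a = b} = n"
  shows "card A = n * card B"
proof -
  have "card A = (\<Sum>b\<in>B. card {a \<in> A. f a = b})"
    using sum.group[OF assms(1-3), of "\<lambda>_. 1::nat"] by simp
  also have "\<dots> = n * card B" using assms(4) by simp
  finally show ?thesis .
qed

definition distinct_triples :: "'a set \<Rightarrow> ('a \<times> 'a \<times> 'a) set" where
  "distinct_triples A = {(a, b, c). a \<in> A \<and> b \<in> A \<and> c \<in> A \<and> distinct [a, b, c]}"

definition distinct_quadruples :: "'a set \<Rightarrow> ('a \<times> 'a \<times> 'a \<times> 'a) set" where
  "distinct_quadruples A = {(a, b, c, d). a \<in> A \<and> b \<in> A \<and> c \<in> A \<and> d \<in> A \<and> distinct [a, b, c, d]}"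

lemma finite_distinct_triples: "finite A \<Longrightarrow> finite (distinct_triples A)"
  by (rule finite_subset[of _ "A \<times> A \<times> A"]) (auto simp: distinct_triples_def)

lemma card_distinct_triples:
  assumes "finite A"
  shows "card (distinct_triples A) = card A * (card A - 1) * (card A - 2)"
proof -
  have "distinct_triples A = (SIGMA a:A. SIGMA b:A - {a}. A - {a, b})"
    unfolding distinct_triples_def by auto
  moreover have "card (A - {a, b}) = card A - 2" if "a \<in> A" "b \<in> A - {a}" for a b
    using that assms by (subst card_Diff_subset) auto
  ultimately have "card (distinct_triples A) = (\<Sum>a\<in>A. \<Sum>b\<in>A - {a}. card A - 2)"
    using assms by simp
  also have "\<dots> = (\<Sum>a\<in>A. (card A - 1) * (card A - 2))"
    using assms by (intro sum.cong refl) (simp add: card_Diff_singleton)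
  finally show ?thesis by simp
qed

lemma card_distinct_quadruples:
  assumes "finite A"
  shows "card (distinct_quadruples A) = card A * (card A - 1) * (card A - 2) * (card A - 3)"
proof -
  have "distinct_quadruples A = (SIGMA a:A. distinct_triples (A - {a}))"
    unfolding distinct_quadruples_def distinct_triples_def by auto
  then have "card (distinct_quadruples A) = (\<Sum>a\<in>A. card (distinct_triples (A - {a})))"
    using assms by (simp add: finite_distinct_triples)
  also have "\<dots> = (\<Sum>a\<in>A. (card A - 1) * (card A - 2) * (card A - 3))"
    using assms by (intro sum.cong refl)
      (simp add: card_distinct_triples card_Diff_singleton numeral_2_eq_2 numeral_3_eq_3)
  finally show ?thesis by simp
qed

lemma of_nat_mult_pred_pred:
  "real (k * (k - 1) * (k - 2)) = real k * (real k - 1) * (real k - 2)"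
  by (cases "k \<ge> 2") (auto simp: not_le less_2_cases_iff)

section \<open>Spanning trees on four vertices of a simple graph\<close>

lemma simple_graph_adjD:
  assumes "simple_graph V E" "E x y"
  shows "x \<in> V" "y \<in> V" "E y x" "x \<noteq> y"
  using assms unfolding simple_graph_def by metis+

lemma simple_graph_finite: "simple_graph V E \<Longrightarrow> finite V"
  unfolding simple_graph_def by simp

lemma finite_nbhd: "simple_graph V E \<Longrightarrow> finite (nbhd V E i)"
  by (rule finite_subset[of _ V]) (auto simp: nbhd_def simple_graph_finite)

lemma gedgesE:
  assumes "e \<in> gedges V E"
  obtains x y where "e = {x, y}" "E x y" "x \<in> V" "y \<in> V"
  using assms unfolding gedges_def by blast

lemma doubleton_in_gedges_iff:
  assumes "simple_graph V E"
  shows "{x, y} \<in> gedges V E \<longleftrightarrow> E x y"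
proof
  assume "{x, y} \<in> gedges V E"
  then obtain u v where "{x, y} = {u, v}" "E u v" by (rule gedgesE)
  then show "E x y" using simple_graph_adjD(3)[OF assms] by (metis doubleton_eq_iff)
next
  assume "E x y"
  then show "{x, y} \<in> gedges V E"
    using simple_graph_adjD(1,2)[OF assms] unfolding gedges_def by blast
qed

lemma finite_gedges: "simple_graph V E \<Longrightarrow> finite (gedges V E)"
  by (rule finite_subset[of _ "Pow V"]) (auto simp: gedges_def simple_graph_finite)

lemma path_not_subset_star:
  assumes "distinct [c, a, b, d]" "distinct [a', b', c', d']"
  shows "\<not> {{a', b'}, {b', c'}, {c', d'}} \<subseteq> {{c, a}, {c, b}, {c, d}}"
  using assms by (auto simp: doubleton_eq_iff)

lemma spanning_trees_4_eq:
  assumes G: "simple_graph V E"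
  shows "spanning_trees V E 4 = stars3 V E \<union> paths4 V E"
proof (intro equalityI subsetI)
  fix F assume "F \<in> spanning_trees V E 4"
  then have F: "F \<subseteq> gedges V E" "sg_tree F" "card (\<Union>F) = 4"
    unfolding spanning_trees_def by auto
  have "\<forall>e\<in>F. \<exists>x y. x \<noteq> y \<and> e = {x, y}"
    using F(1) simple_graph_adjD(4)[OF G] by (blast elim: gedgesE)
  from sg_tree_four_vertices_cases[OF this F(2,3)]
  show "F \<in> stars3 V E \<union> paths4 V E" using F(1) by (simp add: stars3_def paths4_def)
next
  fix F assume "F \<in> stars3 V E \<union> paths4 V E"
  then consider (star) c a b d where "distinct [c, a, b, d]" "F = {{c, a}, {c, b}, {c, d}}"
    | (path) a b c d where "distinct [a, b, c, d]" "F = {{a, b}, {b, c}, {c, d}}"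
    unfolding stars3_def paths4_def by auto
  moreover have "F \<subseteq> gedges V E"
    using \<open>F \<in> stars3 V E \<union> paths4 V E\<close> unfolding stars3_def paths4_def by auto
  ultimately show "F \<in> spanning_trees V E 4"
    unfolding spanning_trees_def by cases (auto simp: sg_tree_star sg_tree_path card_insert_if)
qed

lemma card_spanning_trees_4:
  assumes G: "simple_graph V E"
  shows "card (spanning_trees V E 4) = card (stars3 V E) + card (paths4 V E)"
proof -
  have "F \<notin> paths4 V E" if "F \<in> stars3 V E" for F
  proof
    assume "F \<in> paths4 V E"
    then obtain a' b' c' d' where path_distinct: "distinct [a', b', c', d']"
      and path: "F = {{a', b'}, {b', c'}, {c', d'}}"
      unfolding paths4_def by auto
    from that obtain c a b d where star_distinct: "distinct [c, a, b, d]"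
      and star: "F = {{c, a}, {c, b}, {c, d}}"
      unfolding stars3_def by auto
    have "{{a', b'}, {b', c'}, {c', d'}} \<subseteq> {{c, a}, {c, b}, {c, d}}"
      unfolding path[symmetric] star[symmetric] ..
    with path_not_subset_star[OF star_distinct path_distinct] show False ..
  qed
  then have "stars3 V E \<inter> paths4 V E = {}" by blast
  moreover have "finite (stars3 V E)" "finite (paths4 V E)"
    using finite_gedges[OF G] unfolding stars3_def paths4_def
    by (auto intro: finite_subset[of _ "Pow (gedges V E)"])
  ultimately show ?thesis unfolding spanning_trees_4_eq[OF G] by (simp add: card_Un_disjoint)
qed

section \<open>Double counting\<close>

definition ordered_triangles :: "'a set \<Rightarrow> ('a \<Rightarrow> 'a \<Rightarrow> bool) \<Rightarrow> ('a \<times> 'a \<times> 'a) set" where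
  "ordered_triangles S E = {(j, l, m). j \<in> S \<and> l \<in> S \<and> m \<in> S \<and> E j l \<and> E l m \<and> E m j}"

definition ordered_4cliques :: "'a set \<Rightarrow> ('a \<Rightarrow> 'a \<Rightarrow> bool) \<Rightarrow> ('a \<times> 'a \<times> 'a \<times> 'a) set" where
  "ordered_4cliques V E = {(i, j, l, m). i \<in> V \<and> j \<in> V \<and> l \<in> V \<and> m \<in> V \<and>
     E i j \<and> E i l \<and> E i m \<and> E j l \<and> E l m \<and> E m j}"

lemma trace_cube_adj_eq_card:
  assumes "finite S"
  shows "trace_cube S (adj E) = card (ordered_triangles S E)"
proof -
  have "trace_cube S (adj E) = (\<Sum>(j, l, m)\<in>S \<times> S \<times> S. of_bool (E j l \<and> E l m \<and> E m j))"
    unfolding trace_cube_def adj_def sum.cartesian_product[symmetric] by (intro sum.cong refl) auto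
  also have "\<dots> = (\<Sum>t\<in>S \<times> S \<times> S. of_bool (t \<in> ordered_triangles S E))"
    by (intro sum.cong refl) (auto simp: ordered_triangles_def)
  also have "\<dots> = card (ordered_triangles S E)"
    using assms by (subst sum_of_bool_eq)
      (auto intro!: arg_cong[where f = card] simp: ordered_triangles_def)
  finally show ?thesis .
qed

lemma finite_ordered_triangles: "finite S \<Longrightarrow> finite (ordered_triangles S E)"
  by (rule finite_subset[of _ "S \<times> S \<times> S"]) (auto simp: ordered_triangles_def)

lemma sum_trace_cube_nbhd:
  assumes G: "simple_graph V E"
  shows "(\<Sum>i\<in>V. trace_cube (nbhd V E i) (adj E)) = card (ordered_4cliques V E)"
proof -
  have "ordered_4cliques V E = (SIGMA i:V. ordered_triangles (nbhd V E i) E)"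
    unfolding ordered_4cliques_def ordered_triangles_def nbhd_def by auto
  then show ?thesis
    using simple_graph_finite[OF G] finite_nbhd[OF G]
    by (simp add: trace_cube_adj_eq_card finite_ordered_triangles)
qed

lemma card_ordered_4cliques:
  assumes G: "simple_graph V E"
  shows "card (ordered_4cliques V E) = 24 * card (cliques V E 4)"
proof (rule card_eq_mult_if_fibers[where f = "\<lambda>(i, j, l, m). {i, j, l, m}"])
  show "finite (ordered_4cliques V E)"
    by (rule finite_subset[of _ "V \<times> V \<times> V \<times> V"])
      (auto simp: ordered_4cliques_def simple_graph_finite[OF G])
  show "finite (cliques V E 4)"
    by (rule finite_subset[of _ "Pow V"]) (auto simp: cliques_def simple_graph_finite[OF G])
  show "(\<lambda>(i, j, l, m). {i, j, l, m}) ` ordered_4cliques V E \<subseteq> cliques V E 4"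
    unfolding ordered_4cliques_def cliques_def
    using simple_graph_adjD(3,4)[OF G] by (auto simp: card_insert_if)
next
  fix K assume K: "K \<in> cliques V E 4"
  then have "finite K" "card K = 4" unfolding cliques_def by (auto intro: card_ge_0_finite)
  have "{t \<in> ordered_4cliques V E. (\<lambda>(i, j, l, m). {i, j, l, m}) t = K} = distinct_quadruples K"
  proof (intro equalityI subsetI)
    fix t assume "t \<in> {t \<in> ordered_4cliques V E. (\<lambda>(i, j, l, m). {i, j, l, m}) t = K}"
    then show "t \<in> distinct_quadruples K"
      unfolding ordered_4cliques_def distinct_quadruples_def
      using simple_graph_adjD(4)[OF G] by auto
  next
    fix t assume "t \<in> distinct_quadruples K"
    then obtain i j l m where t: "t = (i, j, l, m)" "{i, j, l, m} \<subseteq> K" "distinct [i, j, l, m]"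
      unfolding distinct_quadruples_def by auto
    then have "{i, j, l, m} = K"
      using \<open>finite K\<close> \<open>card K = 4\<close> by (intro card_subset_eq) auto
    with t K show "t \<in> {t \<in> ordered_4cliques V E. (\<lambda>(i, j, l, m). {i, j, l, m}) t = K}"
      unfolding ordered_4cliques_def cliques_def by auto
  qed
  then show "card {t \<in> ordered_4cliques V E. (\<lambda>(i, j, l, m). {i, j, l, m}) t = K} = 24"
    using card_distinct_quadruples[OF \<open>finite K\<close>] \<open>card K = 4\<close> by simp
qed

definition ordered_3stars :: "'a set \<Rightarrow> ('a \<Rightarrow> 'a \<Rightarrow> bool) \<Rightarrow> ('a \<times> 'a \<times> 'a \<times> 'a) set" where
  "ordered_3stars V E = {(c, a, b, d). c \<in> V \<and> E c a \<and> E c b \<and> E c d \<and> distinct [a, b, d]}"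

lemma sum_deg_falling_3:
  assumes G: "simple_graph V E"
  shows "(\<Sum>i\<in>V. real (deg V E i) * (real (deg V E i) - 1) * (real (deg V E i) - 2))
    = card (ordered_3stars V E)"
proof -
  have "ordered_3stars V E = (SIGMA c:V. distinct_triples (nbhd V E c))"
    unfolding ordered_3stars_def distinct_triples_def nbhd_def
    using simple_graph_adjD(2)[OF G] by auto
  then have "card (ordered_3stars V E) = (\<Sum>c\<in>V. card (distinct_triples (nbhd V E c)))"
    using simple_graph_finite[OF G] finite_nbhd[OF G] by (simp add: finite_distinct_triples)
  also have "\<dots> = (\<Sum>c\<in>V. deg V E c * (deg V E c - 1) * (deg V E c - 2))"
    using finite_nbhd[OF G] by (simp add: card_distinct_triples deg_def nbhd_def)
  finally show ?thesis by (simp only: of_nat_sum of_nat_mult_pred_pred)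
qed

lemma star_subset_imp_same_center_leaves:
  assumes "distinct [c, a, b, d]" "distinct [c', a', b', d']"
    and "{{c', a'}, {c', b'}, {c', d'}} \<subseteq> {{c, a}, {c, b}, {c, d}}"
  shows "c' = c \<and> {a', b', d'} = {a, b, d}"
  using assms by (auto simp: doubleton_eq_iff)

lemma card_ordered_3stars:
  assumes G: "simple_graph V E"
  shows "card (ordered_3stars V E) = 6 * card (stars3 V E)"
proof (rule card_eq_mult_if_fibers[where f = "\<lambda>(c, a, b, d). {{c, a}, {c, b}, {c, d}}"])
  show "finite (ordered_3stars V E)"
    by (rule finite_subset[of _ "V \<times> V \<times> V \<times> V"])
      (auto simp: ordered_3stars_def simple_graph_finite[OF G] dest: simple_graph_adjD[OF G])
  show "finite (stars3 V E)"
    by (rule finite_subset[of _ "Pow (gedges V E)"]) (auto simp: stars3_def finite_gedges[OF G])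
  show "(\<lambda>(c, a, b, d). {{c, a}, {c, b}, {c, d}}) ` ordered_3stars V E \<subseteq> stars3 V E"
  proof
    fix F assume "F \<in> (\<lambda>(c, a, b, d). {{c, a}, {c, b}, {c, d}}) ` ordered_3stars V E"
    then obtain c a b d where F: "F = {{c, a}, {c, b}, {c, d}}" and adj: "E c a" "E c b" "E c d"
      and "distinct [a, b, d]"
      unfolding ordered_3stars_def by auto
    then have "distinct [c, a, b, d]" using simple_graph_adjD(4)[OF G] by auto
    moreover have "F \<subseteq> gedges V E" using adj F by (simp add: doubleton_in_gedges_iff[OF G])
    ultimately show "F \<in> stars3 V E" using F unfolding stars3_def by blast
  qed
next
  fix F assume "F \<in> stars3 V E"
  then obtain c a b d where D: "distinct [c, a, b, d]" and F: "F = {{c, a}, {c, b}, {c, d}}"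
    and "F \<subseteq> gedges V E"
    unfolding stars3_def by auto
  then have adj: "E c a" "E c b" "E c d" "c \<in> V"
    using simple_graph_adjD(1)[OF G] by (auto simp: doubleton_in_gedges_iff[OF G])
  have "{t \<in> ordered_3stars V E. (\<lambda>(c, a, b, d). {{c, a}, {c, b}, {c, d}}) t = F}
      = {c} \<times> distinct_triples {a, b, d}"
  proof (intro equalityI subsetI)
    fix t assume "t \<in> {t \<in> ordered_3stars V E. (\<lambda>(c, a, b, d). {{c, a}, {c, b}, {c, d}}) t = F}"
    then obtain c' a' b' d' where t: "t = (c', a', b', d')" "distinct [a', b', d']"
      "{{c', a'}, {c', b'}, {c', d'}} = F" "E c' a'" "E c' b'" "E c' d'"
      unfolding ordered_3stars_def by auto
    then have "distinct [c', a', b', d']" using simple_graph_adjD(4)[OF G] by auto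
    moreover have "{{c', a'}, {c', b'}, {c', d'}} \<subseteq> {{c, a}, {c, b}, {c, d}}" using t(3) F by simp
    ultimately have "c' = c \<and> {a', b', d'} = {a, b, d}" by (rule star_subset_imp_same_center_leaves[OF D])
    then
    show "t \<in> {c} \<times> distinct_triples {a, b, d}"
      using t(1,2) unfolding distinct_triples_def by auto
  next
    fix t assume "t \<in> {c} \<times> distinct_triples {a, b, d}"
    then obtain a' b' d' where t: "t = (c, a', b', d')" "{a', b', d'} \<subseteq> {a, b, d}" "distinct [a', b', d']"
      unfolding distinct_triples_def by auto
    then have "{a', b', d'} = {a, b, d}" using D by (intro card_subset_eq) auto
    have "{{c, a'}, {c, b'}, {c, d'}} = (\<lambda>v. {c, v}) ` {a', b', d'}" by simp
    also have "\<dots> = F" unfolding \<open>{a', b', d'} = {a, b, d}\<close> F by simp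
    finally have "{{c, a'}, {c, b'}, {c, d'}} = F" .
    with t adj show "t \<in> {t \<in> ordered_3stars V E. (\<lambda>(c, a, b, d). {{c, a}, {c, b}, {c, d}}) t = F}"
      unfolding ordered_3stars_def by auto
  qed
  then show "card {t \<in> ordered_3stars V E. (\<lambda>(c, a, b, d). {{c, a}, {c, b}, {c, d}}) t = F} = 6"
    using D by (simp add: card_cartesian_product card_distinct_triples)
qed

definition ordered_4paths :: "('a \<Rightarrow> 'a \<Rightarrow> bool) \<Rightarrow> ('a \<times> 'a \<times> 'a \<times> 'a) set" where
  "ordered_4paths E = {(a, b, c, d). E a b \<and> E b c \<and> E c d \<and> distinct [a, b, c, d]}"

definition arcs :: "('a \<Rightarrow> 'a \<Rightarrow> bool) \<Rightarrow> ('a \<times> 'a) set" where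
  "arcs E = {(x, y). E x y}"

definition nonbacktracking_walks :: "('a \<Rightarrow> 'a \<Rightarrow> bool) \<Rightarrow> ('a \<times> 'a \<times> 'a \<times> 'a) set" where
  "nonbacktracking_walks E = {(a, b, c, d). E a b \<and> E b c \<and> E c d \<and> a \<noteq> c \<and> b \<noteq> d}"

lemma path_subset_imp_same_or_reversed:
  assumes "distinct [a, b, c, d]" "distinct [a', b', c', d']"
    and "{{a', b'}, {b', c'}, {c', d'}} \<subseteq> {{a, b}, {b, c}, {c, d}}"
  shows "(a', b', c', d') = (a, b, c, d) \<or> (a', b', c', d') = (d, c, b, a)"
  using assms by (auto simp: doubleton_eq_iff)

lemma finite_4tuples_of_edges:
  assumes "simple_graph V E" "T \<subseteq> {(a, b, c, d). E a b \<and> E b c \<and> E c d}"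
  shows "finite T"
proof (rule finite_subset)
  show "T \<subseteq> V \<times> V \<times> V \<times> V"
    using assms(2) by (auto dest: simple_graph_adjD(1,2)[OF assms(1)])
qed (simp add: simple_graph_finite[OF assms(1)])

lemma card_ordered_4paths:
  assumes G: "simple_graph V E"
  shows "card (ordered_4paths E) = 2 * card (paths4 V E)"
proof (rule card_eq_mult_if_fibers[where f = "\<lambda>(a, b, c, d). {{a, b}, {b, c}, {c, d}}"])
  show "finite (ordered_4paths E)"
    by (rule finite_4tuples_of_edges[OF G]) (auto simp: ordered_4paths_def)
  show "finite (paths4 V E)"
    by (rule finite_subset[of _ "Pow (gedges V E)"]) (auto simp: paths4_def finite_gedges[OF G])
  show "(\<lambda>(a, b, c, d). {{a, b}, {b, c}, {c, d}}) ` ordered_4paths E \<subseteq> paths4 V E"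
  proof
    fix F assume "F \<in> (\<lambda>(a, b, c, d). {{a, b}, {b, c}, {c, d}}) ` ordered_4paths E"
    then obtain a b c d where F: "F = {{a, b}, {b, c}, {c, d}}" and adj: "E a b" "E b c" "E c d"
      and "distinct [a, b, c, d]"
      unfolding ordered_4paths_def by auto
    moreover have "F \<subseteq> gedges V E" using adj F by (simp add: doubleton_in_gedges_iff[OF G])
    ultimately show "F \<in> paths4 V E" unfolding paths4_def by blast
  qed
next
  fix F assume "F \<in> paths4 V E"
  then obtain a b c d where D: "distinct [a, b, c, d]" and F: "F = {{a, b}, {b, c}, {c, d}}"
    and "F \<subseteq> gedges V E"
    unfolding paths4_def by auto
  then have adj: "E a b" "E b c" "E c d"
    by (auto simp: doubleton_in_gedges_iff[OF G])
  have "{t \<in> ordered_4paths E. (\<lambda>(a, b, c, d). {{a, b}, {b, c}, {c, d}}) t = F}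
      = {(a, b, c, d), (d, c, b, a)}"
  proof (intro equalityI subsetI)
    fix t assume "t \<in> {t \<in> ordered_4paths E. (\<lambda>(a, b, c, d). {{a, b}, {b, c}, {c, d}}) t = F}"
    then obtain a' b' c' d' where t: "t = (a', b', c', d')" "distinct [a', b', c', d']"
      "{{a', b'}, {b', c'}, {c', d'}} = F"
      unfolding ordered_4paths_def by auto
    then have "{{a', b'}, {b', c'}, {c', d'}} \<subseteq> {{a, b}, {b, c}, {c, d}}" using F by simp
    from path_subset_imp_same_or_reversed[OF D t(2) this]
    show "t \<in> {(a, b, c, d), (d, c, b, a)}" using t(1) by auto
  next
    fix t assume "t \<in> {(a, b, c, d), (d, c, b, a)}"
    with D adj show "t \<in> {t \<in> ordered_4paths E. (\<lambda>(a, b, c, d). {{a, b}, {b, c}, {c, d}}) t = F}"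
      unfolding ordered_4paths_def F using simple_graph_adjD(3)[OF G]
      by (auto simp: insert_commute)
  qed
  then show "card {t \<in> ordered_4paths E. (\<lambda>(a, b, c, d). {{a, b}, {b, c}, {c, d}}) t = F} = 2"
    using D by simp
qed

lemma finite_arcs:
  assumes "simple_graph V E"
  shows "finite (arcs E)"
proof (rule finite_subset)
  show "arcs E \<subseteq> V \<times> V" by (auto simp: arcs_def dest: simple_graph_adjD(1,2)[OF assms])
qed (simp add: simple_graph_finite[OF assms])

lemma sum_gedges_eq_sum_arcs:
  fixes f :: "'a \<Rightarrow> real"
  assumes G: "simple_graph V E"
  shows "2 * (\<Sum>e\<in>gedges V E. \<Prod>v\<in>e. f v) = (\<Sum>(x, y)\<in>arcs E. f x * f y)"
proof -
  have "(\<lambda>(x, y). {x, y}) ` arcs E \<subseteq> gedges V E"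
    unfolding arcs_def by (auto simp: doubleton_in_gedges_iff[OF G])
  then have "(\<Sum>(x, y)\<in>arcs E. f x * f y)
      = (\<Sum>e\<in>gedges V E. \<Sum>t\<in>{t \<in> arcs E. (\<lambda>(x, y). {x, y}) t = e}. (\<lambda>(x, y). f x * f y) t)"
    by (rule sum.group[OF finite_arcs[OF G] finite_gedges[OF G], symmetric])
  also have "\<dots> = (\<Sum>e\<in>gedges V E. 2 * (\<Prod>v\<in>e. f v))"
  proof (rule sum.cong[OF refl])
    fix e assume "e \<in> gedges V E"
    then obtain x y where e: "e = {x, y}" "E x y" by (rule gedgesE)
    have "x \<noteq> y" "E y x" using simple_graph_adjD(3,4)[OF G e(2)] by auto
    have "{t \<in> arcs E. (\<lambda>(x, y). {x, y}) t = e} = {(x, y), (y, x)}"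
    proof (rule set_eqI)
      fix t :: "'a \<times> 'a"
      obtain u v where t: "t = (u, v)" by fastforce
      have "E u v \<and> {u, v} = {x, y} \<longleftrightarrow> (u, v) = (x, y) \<or> (u, v) = (y, x)"
        using e(2) \<open>E y x\<close> by (auto simp: doubleton_eq_iff)
      then show "t \<in> {t \<in> arcs E. (\<lambda>(x, y). {x, y}) t = e} \<longleftrightarrow> t \<in> {(x, y), (y, x)}"
        unfolding t arcs_def e(1) by auto
    qed
    then show "(\<Sum>t\<in>{t \<in> arcs E. (\<lambda>(x, y). {x, y}) t = e}. (\<lambda>(x, y). f x * f y) t)
        = 2 * (\<Prod>v\<in>e. f v)"
      using \<open>x \<noteq> y\<close> e(1) by (simp add: mult.commute)
  qed
  finally show ?thesis by (simp add: sum_distrib_left)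
qed

lemma card_nonbacktracking_walks:
  assumes G: "simple_graph V E"
  shows "real (card (nonbacktracking_walks E))
    = (\<Sum>(x, y)\<in>arcs E. (real (deg V E x) - 1) * (real (deg V E y) - 1))"
proof -
  define middle where "middle = (\<lambda>(b, c). (nbhd V E b - {c}) \<times> (nbhd V E c - {b}))"
  have "nonbacktracking_walks E = (\<lambda>((b, c), (a, d)). (a, b, c, d)) ` Sigma (arcs E) middle"
  proof (intro equalityI subsetI)
    fix t assume "t \<in> nonbacktracking_walks E"
    then obtain a b c d where t: "t = (a, b, c, d)" and walk: "E a b" "E b c" "E c d" "a \<noteq> c" "b \<noteq> d"
      unfolding nonbacktracking_walks_def by auto
    have "E b a" "a \<in> V" "d \<in> V"
      using simple_graph_adjD(1,3)[OF G walk(1)] simple_graph_adjD(2)[OF G walk(3)] by auto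
    with walk have "((b, c), (a, d)) \<in> Sigma (arcs E) middle"
      by (auto simp: arcs_def middle_def nbhd_def)
    then show "t \<in> (\<lambda>((b, c), (a, d)). (a, b, c, d)) ` Sigma (arcs E) middle"
      unfolding t by force
  next
    fix t assume "t \<in> (\<lambda>((b, c), (a, d)). (a, b, c, d)) ` Sigma (arcs E) middle"
    then obtain a b c d where "t = (a, b, c, d)" "E b c" "E b a" "E c d" "a \<noteq> c" "b \<noteq> d"
      by (auto simp: arcs_def middle_def nbhd_def)
    then show "t \<in> nonbacktracking_walks E"
      using simple_graph_adjD(3)[OF G \<open>E b a\<close>] by (simp add: nonbacktracking_walks_def)
  qed
  moreover have "inj_on (\<lambda>((b, c), (a, d)). (a, b, c, d)) (Sigma (arcs E) middle)"
    by (auto simp: inj_on_def)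
  ultimately have "card (nonbacktracking_walks E) = card (Sigma (arcs E) middle)"
    by (simp add: card_image)
  also have "\<dots> = (\<Sum>bc\<in>arcs E. card (middle bc))"
    using finite_arcs[OF G] finite_nbhd[OF G] by (intro card_SigmaI) (auto simp: middle_def)
  finally have card_walks: "card (nonbacktracking_walks E) = (\<Sum>bc\<in>arcs E. card (middle bc))" .
  have card_middle: "real (card (middle (x, y))) = (real (deg V E x) - 1) * (real (deg V E y) - 1)"
    if "(x, y) \<in> arcs E" for x y
  proof -
    have "E x y" using that by (simp add: arcs_def)
    then have "y \<in> nbhd V E x" "x \<in> nbhd V E y"
      using simple_graph_adjD[OF G \<open>E x y\<close>] by (auto simp: nbhd_def)
    then have "deg V E x \<ge> 1" "deg V E y \<ge> 1"
      "card (middle (x, y)) = (deg V E x - 1) * (deg V E y - 1)"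
      using finite_nbhd[OF G]
      by (auto simp: middle_def deg_def nbhd_def card_cartesian_product card_gt_0_iff Suc_le_eq)
    then show ?thesis by simp
  qed
  show ?thesis
    unfolding card_walks of_nat_sum
    by (intro sum.cong refl) (auto simp: card_middle)
qed

lemma card_nonbacktracking_walks_split:
  assumes G: "simple_graph V E"
  shows "card (nonbacktracking_walks E) = card (ordered_4paths E) + card (ordered_triangles V E)"
proof -
  let ?close = "\<lambda>(a, b, c). (a, b, c, a)"
  have "nonbacktracking_walks E = ordered_4paths E \<union> ?close ` ordered_triangles V E"
  proof (intro equalityI subsetI)
    fix t assume "t \<in> nonbacktracking_walks E"
    then obtain a b c d where t: "t = (a, b, c, d)" and walk: "E a b" "E b c" "E c d" "a \<noteq> c" "b \<noteq> d"
      unfolding nonbacktracking_walks_def by auto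
    have "a \<noteq> b" "b \<noteq> c" "c \<noteq> d" "a \<in> V" "b \<in> V" "c \<in> V"
      using simple_graph_adjD(1,2,4)[OF G walk(1)] simple_graph_adjD(2,4)[OF G walk(2)]
        simple_graph_adjD(4)[OF G walk(3)] by auto
    then show "t \<in> ordered_4paths E \<union> ?close ` ordered_triangles V E"
      using walk unfolding t ordered_4paths_def ordered_triangles_def
      by (cases "a = d") (auto intro: image_eqI[where x = "(a, b, c)"])
  next
    fix t assume "t \<in> ordered_4paths E \<union> ?close ` ordered_triangles V E"
    then show "t \<in> nonbacktracking_walks E"
      unfolding ordered_4paths_def ordered_triangles_def nonbacktracking_walks_def
      by (auto dest: simple_graph_adjD(4)[OF G])
  qed
  moreover have "ordered_4paths E \<inter> ?close ` ordered_triangles V E = {}"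
    unfolding ordered_4paths_def by auto
  moreover have "inj_on ?close (ordered_triangles V E)" by (auto simp: inj_on_def)
  moreover have "finite (ordered_4paths E)"
    by (rule finite_4tuples_of_edges[OF G]) (auto simp: ordered_4paths_def)
  ultimately show ?thesis
    using finite_ordered_triangles[OF simple_graph_finite[OF G]]
    by (simp add: card_Un_disjoint card_image)
qed

theorem mainTheorem7:
  fixes V :: "'a set" and E :: "'a \<Rightarrow> 'a \<Rightarrow> bool"
  assumes "simple_graph V E"
    and "spanning_trees V E 4 \<noteq> {}"
  shows "C V E 4 = 16 * real (card (cliques V E 4))
                   / (real (card (stars3 V E)) + real (card (paths4 V E)))
       \<and> 16 * real (card (cliques V E 4))
                   / (real (card (stars3 V E)) + real (card (paths4 V E)))
         = 4 * (\<Sum>i\<in>V. trace_cube (nbhd V E i) (adj E))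
           / ((\<Sum>i\<in>V. real (deg V E i) * (real (deg V E i) - 1) * (real (deg V E i) - 2))
              + 6 * (\<Sum>e\<in>gedges V E. \<Prod>v\<in>e. (real (deg V E v) - 1))
              - 3 * trace_cube V (adj E))"
proof -
  note G = \<open>simple_graph V E\<close>
  define k s p t where "k = real (card (cliques V E 4))" and "s = real (card (stars3 V E))"
    and "p = real (card (paths4 V E))" and "t = real (card (ordered_triangles V E))"
  have C4: "C V E 4 = 16 * k / (s + p)"
    unfolding C_def card_spanning_trees_4[OF G] k_def s_def p_def by simp
  have cliques: "(\<Sum>i\<in>V. trace_cube (nbhd V E i) (adj E)) = 24 * k"
    unfolding sum_trace_cube_nbhd[OF G] card_ordered_4cliques[OF G] k_def by simp
  have stars: "(\<Sum>i\<in>V. real (deg V E i) * (real (deg V E i) - 1) * (real (deg V E i) - 2)) = 6 * s"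
    unfolding sum_deg_falling_3[OF G] card_ordered_3stars[OF G] s_def by simp
  have "2 * (\<Sum>e\<in>gedges V E. \<Prod>v\<in>e. (real (deg V E v) - 1)) = 2 * p + t"
    unfolding sum_gedges_eq_sum_arcs[OF G] card_nonbacktracking_walks[OF G, symmetric]
      card_nonbacktracking_walks_split[OF G] card_ordered_4paths[OF G] p_def t_def by simp
  then have walks: "(\<Sum>e\<in>gedges V E. \<Prod>v\<in>e. (real (deg V E v) - 1)) = p + t / 2" by simp
  have triangles: "trace_cube V (adj E) = t"
    unfolding t_def by (rule trace_cube_adj_eq_card[OF simple_graph_finite[OF G]])
  have "(\<Sum>i\<in>V. real (deg V E i) * (real (deg V E i) - 1) * (real (deg V E i) - 2))
      + 6 * (\<Sum>e\<in>gedges V E. \<Prod>v\<in>e. (real (deg V E v) - 1)) - 3 * trace_cube V (adj E)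
      = 6 * (s + p)"
    unfolding stars walks triangles by (simp add: algebra_simps)
  moreover have "4 * (24 * k) / (6 * (s + p)) = 16 * k / (s + p)"
    using mult_divide_mult_cancel_left[of 6 "16 * k" "s + p"] by simp
  ultimately show ?thesis
    unfolding C4 cliques k_def[symmetric] s_def[symmetric] p_def[symmetric] by simp
qed

end
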